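(* Let $N,M\ge1$, $\mathbf{y}\in\mathbb{C}^M$, $\mathbf{x}\in\mathbb{R}^N$, $\mu_1,\dots,\mu_N\in\mathbb{R}$, $\sigma_1,\dots,\sigma_N>0$, $\delta^2>0$, $\sigma_h^2>0$, $\sigma_w^2>0$, and let $c=\exp\left(\frac{2\pi j}{N+1}\right)$ with $j=\sqrt{-1}$. Consider latent variables $T\in\{0,1,\dots,N\}$ and $\boldsymbol\theta=[\theta_1,\dots,\theta_N]^T\in(0,1)^N$ with joint density (with observation $\mathbf{y}$) $$p(\mathbf{y},T=m,\boldsymbol\theta\mid\boldsymbol\Phi)=\frac{1}{[2\pi(\sigma_h^2m+\sigma_w^2)]^M}\exp\left(-\frac{\|\mathbf{y}\|_2^2}{2(\sigma_h^2m+\sigma_w^2)}\right)\cdot P(m\mid\boldsymbol\theta)\cdot p(\boldsymbol\theta\mid\mathbf{x}),$$ where $P(m\mid\boldsymbol\theta)=\frac{1}{N+1}\sum_{\ell=0}^N c^{-\ell m}\prod_{k=1}^N[1+(c^\ell-1)\theta_k]$ (the Poisson-binomial probability of $m$ successes in independent Bernoulli trials with success probabilities $\theta_1,\dots,\theta_N$) and $$p(\boldsymbol\theta\mid\mathbf{x})=\left(\prod_{n=1}^N\frac{\sigma_n}{\theta_n-\theta_n^2}\right)\frac{1}{(2\pi)^{N/2}\delta^N}\exp\left(-\frac{\sum_{n=1}^N\left(-\sigma_n\log\left(\frac{1}{\theta_n}-1\right)+\mu_n-x_n\right)^2}{2\delta^2}\right).$$ Let $q(T)$ be a probability mass function on $\{0,\dots,N\}$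 and $q(\theta_1),\dots,q(\theta_N)$ probability densities on $(0,1)$, and let $\mathbb{E}$ denote expectation with respect to the product distribution $q(T)\prod_n q(\theta_n)$. Then the mean-field (variational E-step) updates $$q^*(T)\propto\exp\left\{\mathbb{E}_{\boldsymbol\theta}\left[\log p(\mathbf{y},T,\boldsymbol\theta\mid\boldsymbol\Phi)\right]\right\},\qquad q^*(\theta_n)\propto\exp\left\{\mathbb{E}_{T,\boldsymbol\theta\setminus\theta_n}\left[\log p(\mathbf{y},T,\boldsymbol\theta\mid\boldsymbol\Phi)\right]\right\}$$ are given by $$q^*(T=m)=\frac{g_a(m)}{\sum_{k=0}^N g_a(k)},\qquad q^*(\theta_n=z_n)=\frac{g_b(z_n)}{\int_0^1 g_b(z_n)\,dz_n},$$ where $$g_a(m)=\frac{\mathcal{F}_1(m)}{(\sigma_w^2+m\sigma_h^2)^M}\exp\left\{-\frac{\|\mathbf{y}\|_2^2}{2(\sigma_w^2+m\sigma_h^2)}\right\},$$ $$g_b(z_n)=\frac{\mathcal{F}_2(z_n)}{z_n(1-z_n)}\exp\left\{-\frac{1}{2\delta^2}\left(-\sigma_n\log\left(\frac{1}{z_n}-1\right)+\mu_n-x_n\right)^2\right\},$$ $$\mathcal{F}_1(m)=\exp\left\{\mathbb{E}_{\boldsymbol\theta}\left(\log\Big(\sum_{\ell=0}^N c^{-\ell m}\prod_{k=1}^N[1+(c^\ell-1)\theta_k]\Big)\right)\right\},$$ $$\mathcal{F}_2(z_n)=\left.\exp\left\{\mathbb{E}_{T,\boldsymbol\theta\setminus\theta_n}\left(\log\Big(\sum_{\ell=0}^N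 c^{-\ell T}\prod_{k=1}^N[1+(c^\ell-1)\theta_k]\Big)\right)\right\}\right|_{\theta_n=z_n}.$$
   Context: $\boldsymbol\Phi=\{\mathbf{x},\delta^2,\sigma_h^2,\sigma_w^2\}$ is the parameter set. $\mathbb{E}_{\boldsymbol\theta}$ is expectation over $\boldsymbol\theta\sim\prod_k q(\theta_k)$; $\mathbb{E}_{T,\boldsymbol\theta\setminus\theta_n}$ is expectation over $T\sim q(T)$ and $\theta_k\sim q(\theta_k)$, $k\ne n$, independently, with $\theta_n$ held fixed. The sum $\sum_{\ell}c^{-\ell m}\prod_k[1+(c^\ell-1)\theta_k]$ equals $(N+1)P(m\mid\boldsymbol\theta)$, a positive real number. Expectations are assumed finite. *)

theory Defs
  imports "HOL-Probability.Probability"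
begin

definition c_root :: "nat \<Rightarrow> complex" where
  "c_root N = cis (2 * pi / real (N + 1))"

definition PBsum :: "nat \<Rightarrow> nat \<Rightarrow> (nat \<Rightarrow> real) \<Rightarrow> complex" where
  "PBsum N m \<theta> = (\<Sum>l = 0..N. inverse (c_root N) ^ (l * m) *
        (\<Prod>k = 1..N. 1 + (c_root N ^ l - 1) * complex_of_real (\<theta> k)))"

definition PB :: "nat \<Rightarrow> nat \<Rightarrow> (nat \<Rightarrow> real) \<Rightarrow> real" where
  "PB N m \<theta> = Re (PBsum N m \<theta>) / real (N + 1)"

definition prior :: "nat \<Rightarrow> (nat \<Rightarrow> real) \<Rightarrow> (nat \<Rightarrow> real) \<Rightarrow> real \<Rightarrow> (nat \<Rightarrow> real)
    \<Rightarrow> (nat \<Rightarrow> real) \<Rightarrow> real" where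
  "prior N \<mu> \<sigma> dsq x \<theta> =
     (\<Prod>n = 1..N. \<sigma> n / (\<theta> n - (\<theta> n)\<^sup>2)) *
     (1 / ((2 * pi) powr (real N / 2) * sqrt dsq ^ N)) *
     exp (- (\<Sum>n = 1..N. (- \<sigma> n * ln (1 / \<theta> n - 1) + \<mu> n - x n)\<^sup>2) / (2 * dsq))"

text \<open>Joint density p(y, T = m, theta | Phi); M = CARD('m), hsq = sigma_h^2, wsq = sigma_w^2.\<close>
definition joint :: "nat \<Rightarrow> (nat \<Rightarrow> real) \<Rightarrow> (nat \<Rightarrow> real) \<Rightarrow> real \<Rightarrow> real \<Rightarrow> real
    \<Rightarrow> (nat \<Rightarrow> real) \<Rightarrow> complex ^ 'm \<Rightarrow> nat \<Rightarrow> (nat \<Rightarrow> real) \<Rightarrow> real" where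
  "joint N \<mu> \<sigma> dsq hsq wsq x y m \<theta> =
     1 / (2 * pi * (hsq * real m + wsq)) ^ CARD('m) *
     exp (- (norm y)\<^sup>2 / (2 * (hsq * real m + wsq))) *
     PB N m \<theta> * prior N \<mu> \<sigma> dsq x \<theta>"

definition qdist :: "(nat \<Rightarrow> real \<Rightarrow> real) \<Rightarrow> nat \<Rightarrow> real measure" where
  "qdist qth n = density lborel (\<lambda>z. ennreal (qth n z) * indicator {0<..<1} z)"

definition Qprod :: "(nat \<Rightarrow> real \<Rightarrow> real) \<Rightarrow> nat set \<Rightarrow> (nat \<Rightarrow> real) measure" where
  "Qprod qth I = PiM I (qdist qth)"

definition qstarT :: "nat \<Rightarrow> (nat \<Rightarrow> real) \<Rightarrow> (nat \<Rightarrow> real) \<Rightarrow> real \<Rightarrow> real \<Rightarrow> real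
    \<Rightarrow> (nat \<Rightarrow> real) \<Rightarrow> complex ^ 'm \<Rightarrow> (nat \<Rightarrow> real \<Rightarrow> real) \<Rightarrow> nat \<Rightarrow> real" where
  "qstarT N \<mu> \<sigma> dsq hsq wsq x y qth m =
     exp (\<integral>\<theta>. ln (joint N \<mu> \<sigma> dsq hsq wsq x y m \<theta>) \<partial>Qprod qth {1..N}) /
     (\<Sum>k = 0..N. exp (\<integral>\<theta>. ln (joint N \<mu> \<sigma> dsq hsq wsq x y k \<theta>) \<partial>Qprod qth {1..N}))"

definition Hth :: "nat \<Rightarrow> (nat \<Rightarrow> real) \<Rightarrow> (nat \<Rightarrow> real) \<Rightarrow> real \<Rightarrow> real \<Rightarrow> real
    \<Rightarrow> (nat \<Rightarrow> real) \<Rightarrow> complex ^ 'm \<Rightarrow> (nat \<Rightarrow> real) \<Rightarrow> (nat \<Rightarrow> real \<Rightarrow> real)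
    \<Rightarrow> nat \<Rightarrow> real \<Rightarrow> real" where
  "Hth N \<mu> \<sigma> dsq hsq wsq x y qT qth n z =
     (\<Sum>m = 0..N. qT m *
        (\<integral>\<theta>. ln (joint N \<mu> \<sigma> dsq hsq wsq x y m (\<theta>(n := z))) \<partial>Qprod qth ({1..N} - {n})))"

definition qstarTheta :: "nat \<Rightarrow> (nat \<Rightarrow> real) \<Rightarrow> (nat \<Rightarrow> real) \<Rightarrow> real \<Rightarrow> real \<Rightarrow> real
    \<Rightarrow> (nat \<Rightarrow> real) \<Rightarrow> complex ^ 'm \<Rightarrow> (nat \<Rightarrow> real) \<Rightarrow> (nat \<Rightarrow> real \<Rightarrow> real)
    \<Rightarrow> nat \<Rightarrow> real \<Rightarrow> real" where
  "qstarTheta N \<mu> \<sigma> dsq hsq wsq x y qT qth n z =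
     exp (Hth N \<mu> \<sigma> dsq hsq wsq x y qT qth n z) /
     (LINT w:{0<..<1}|lborel. exp (Hth N \<mu> \<sigma> dsq hsq wsq x y qT qth n w))"

definition F1 :: "nat \<Rightarrow> (nat \<Rightarrow> real \<Rightarrow> real) \<Rightarrow> nat \<Rightarrow> real" where
  "F1 N qth m = exp (\<integral>\<theta>. ln (Re (PBsum N m \<theta>)) \<partial>Qprod qth {1..N})"

definition F2 :: "nat \<Rightarrow> (nat \<Rightarrow> real) \<Rightarrow> (nat \<Rightarrow> real \<Rightarrow> real) \<Rightarrow> nat \<Rightarrow> real \<Rightarrow> real" where
  "F2 N qT qth n z = exp (\<Sum>m = 0..N. qT m *
        (\<integral>\<theta>. ln (Re (PBsum N m (\<theta>(n := z)))) \<partial>Qprod qth ({1..N} - {n})))"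

definition ga :: "nat \<Rightarrow> real \<Rightarrow> real \<Rightarrow> complex ^ 'm \<Rightarrow> (nat \<Rightarrow> real \<Rightarrow> real) \<Rightarrow> nat \<Rightarrow> real" where
  "ga N hsq wsq y qth m =
     F1 N qth m / (wsq + real m * hsq) ^ CARD('m) *
     exp (- (norm y)\<^sup>2 / (2 * (wsq + real m * hsq)))"

definition gb :: "nat \<Rightarrow> (nat \<Rightarrow> real) \<Rightarrow> (nat \<Rightarrow> real) \<Rightarrow> real \<Rightarrow> (nat \<Rightarrow> real)
    \<Rightarrow> (nat \<Rightarrow> real) \<Rightarrow> (nat \<Rightarrow> real \<Rightarrow> real) \<Rightarrow> nat \<Rightarrow> real \<Rightarrow> real" where
  "gb N \<mu> \<sigma> dsq x qT qth n z =
     F2 N qT qth n z / (z * (1 - z)) *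
     exp (- (1 / (2 * dsq)) * (- \<sigma> n * ln (1 / z - 1) + \<mu> n - x n)\<^sup>2)"

end

(*
  Discrete Fourier inversion over the (N+1)-th roots of unity turns the sum over l into
  (N+1) times the Poisson-binomial probability, the sum over all m-element S of
  prod_{k in S} theta_k * prod_{k not in S} (1 - theta_k), which is positive on the open
  unit cube.  Hence the logarithm of the joint density splits into the log-likelihood of y
  given T = m, the logarithm of that sum, and one prior term per coordinate theta_k.  In each
  mean-field expectation, the summands not involving the variable being updated contribute a
  constant that is the same for all its values, and this constant cancels on normalisation.
*)
theory Submission
  imports Defs
begin

lemma sum_root_of_unity_powers:
  fixes j m N :: nat
  assumes "j \<le> N" "m \<le> N"
  shows "(\<Sum>l = 0..N. inverse (c_root N) ^ (l * m) * (c_root N ^ l) ^ j)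
           = (if j = m then of_nat (N + 1) else 0)"
proof -
  define t where "t = 2 * pi * (real j - real m) / real (N + 1)"
  define w where "w = cis t"
  have term_eq: "inverse (c_root N) ^ (l * m) * (c_root N ^ l) ^ j = w ^ l" for l
    unfolding c_root_def cis_inverse Complex.DeMoivre cis_mult w_def
    by (simp add: t_def diff_divide_distrib algebra_simps)
  have "(\<Sum>l = 0..N. inverse (c_root N) ^ (l * m) * (c_root N ^ l) ^ j) = (\<Sum>l<N + 1. w ^ l)"
    by (simp add: term_eq atLeast0AtMost lessThan_Suc_atMost)
  also have "\<dots> = (if j = m then of_nat (N + 1) else 0)"
  proof (cases "j = m")
    case True
    then show ?thesis by (simp add: w_def t_def)
  next
    case False
    have "w ^ (N + 1) = cis (2 * pi * real_of_int (int j - int m))"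
      unfolding w_def Complex.DeMoivre by (simp add: t_def)
    then have w_pow: "w ^ (N + 1) = 1"
      by (simp only: cis_multiple_2pi[of "real_of_int (int j - int m)"] Ints_of_int)
    have "w \<noteq> 1"
    proof
      assume "w = 1"
      then obtain n :: int where "t = of_int (2 * n) * pi"
        by (auto simp: w_def cis_conv_exp exp_eq_1)
      then have "2 * pi * (real j - real m) = 2 * pi * (real_of_int n * real (N + 1))"
        by (simp add: t_def field_simps)
      then have "real j - real m = real_of_int n * real (N + 1)"
        by simp
      then have "real_of_int (int j - int m) = real_of_int (n * int (N + 1))"
        by simp
      then have "int j - int m = n * int (N + 1)"
        by (simp only: of_int_eq_iff)
      moreover have "\<bar>int j - int m\<bar> < int (N + 1)" using assms by simp
      ultimately have "n = 0" by (auto simp: abs_mult)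
      then show False using \<open>int j - int m = n * int (N + 1)\<close> False by simp
    qed
    then show ?thesis using geometric_sum[of w "N + 1"] w_pow False by simp
  qed
  finally show ?thesis .
qed

lemma PBsum_eq_poisson_binomial:
  assumes "m \<le> N"
  shows "PBsum N m \<theta> = complex_of_real (real (N + 1) *
           (\<Sum>S | S \<subseteq> {1..N} \<and> card S = m. (\<Prod>k\<in>S. \<theta> k) * (\<Prod>k\<in>{1..N} - S. 1 - \<theta> k)))"
proof -
  define p where "p S = (\<Prod>k\<in>S. \<theta> k) * (\<Prod>k\<in>{1..N} - S. 1 - \<theta> k)" for S
  have expand: "(\<Prod>k = 1..N. 1 + (w - 1) * complex_of_real (\<theta> k))
      = (\<Sum>S\<in>Pow {1..N}. w ^ card S * complex_of_real (p S))" for w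
  proof -
    have "(\<Prod>k = 1..N. 1 + (w - 1) * complex_of_real (\<theta> k))
        = (\<Prod>k = 1..N. w * complex_of_real (\<theta> k) + complex_of_real (1 - \<theta> k))"
      by (simp add: algebra_simps)
    also have "\<dots> = (\<Sum>S\<in>Pow {1..N}. w ^ card S * complex_of_real (p S))"
      by (simp add: prod_add prod.distrib p_def mult.assoc)
    finally show ?thesis .
  qed
  have card_le: "S \<in> Pow {1..N} \<Longrightarrow> card S \<le> N" for S
    using card_mono[of "{1..N}" S] by simp
  have "PBsum N m \<theta> = (\<Sum>S\<in>Pow {1..N}. complex_of_real (p S) *
      (\<Sum>l = 0..N. inverse (c_root N) ^ (l * m) * (c_root N ^ l) ^ card S))"
    unfolding PBsum_def expand
    by (simp add: sum_distrib_left sum_distrib_right sum.swap[of _ "{0..N}"] algebra_simps)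
  also have "\<dots> = (\<Sum>S\<in>Pow {1..N}. if card S = m then of_nat (N + 1) * complex_of_real (p S) else 0)"
    by (rule sum.cong) (simp_all add: sum_root_of_unity_powers card_le assms)
  also have "\<dots> = complex_of_real (real (N + 1) * (\<Sum>S | S \<subseteq> {1..N} \<and> card S = m. p S))"
    by (simp add: sum.If_cases sum_distrib_left Int_def conj_commute)
  finally show ?thesis unfolding p_def .
qed

lemma Re_PBsum_pos:
  assumes \<theta>: "\<forall>k\<in>{1..N}. 0 < \<theta> k \<and> \<theta> k < 1" and "m \<le> N"
  shows "Re (PBsum N m \<theta>) > 0"
proof -
  obtain S0 where S0: "S0 \<subseteq> {1..N}" "card S0 = m"
    using obtain_subset_with_card_n[of m "{1..N}"] \<open>m \<le> N\<close> by auto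
  have "(\<Sum>S | S \<subseteq> {1..N} \<and> card S = m. (\<Prod>k\<in>S. \<theta> k) * (\<Prod>k\<in>{1..N} - S. 1 - \<theta> k)) > 0"
  proof (rule sum_pos)
    show "{S. S \<subseteq> {1..N} \<and> card S = m} \<noteq> {}" using S0 by auto
    show "(\<Prod>k\<in>S. \<theta> k) * (\<Prod>k\<in>{1..N} - S. 1 - \<theta> k) > 0"
      if "S \<in> {S. S \<subseteq> {1..N} \<and> card S = m}" for S
      using that \<theta> by (intro mult_pos_pos prod_pos) auto
  qed (simp add: finite_subset)
  then show ?thesis unfolding PBsum_eq_poisson_binomial[OF \<open>m \<le> N\<close>] Re_complex_of_real by simp
qed

lemma prob_space_qdist:
  assumes "qth n \<in> borel_measurable lborel"
    and "(\<integral>\<^sup>+ z\<in>{0<..<1}. ennreal (qth n z) \<partial>lborel) = 1"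
  shows "prob_space (qdist qth n)"
proof
  have "(\<lambda>z. ennreal (qth n z) * indicator {0<..<1::real} z) \<in> borel_measurable lborel"
    using assms(1) by measurable
  then show "emeasure (qdist qth n) (space (qdist qth n)) = 1"
    unfolding qdist_def using assms(2) by (simp add: emeasure_density)
qed

lemma AE_qdist_in_unit_interval:
  assumes "qth n \<in> borel_measurable lborel"
  shows "AE z in qdist qth n. 0 < z \<and> z < 1"
proof -
  have "(\<lambda>z. ennreal (qth n z) * indicator {0<..<1::real} z) \<in> borel_measurable lborel"
    using assms by measurable
  then show ?thesis
    unfolding qdist_def by (simp add: AE_density indicator_def)
qed

lemma
  assumes meas: "\<forall>n\<in>I. qth n \<in> borel_measurable lborel"
    and norm: "\<forall>n\<in>I. (\<integral>\<^sup>+ z\<in>{0<..<1}. ennreal (qth n z) \<partial>lborel) = 1"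
    and "finite I"
  shows prob_space_Qprod: "prob_space (Qprod qth I)"
    and AE_Qprod_in_unit_cube: "AE \<theta> in Qprod qth I. \<forall>k\<in>I. 0 < \<theta> k \<and> \<theta> k < 1"
proof -
  have prob: "\<And>n. n \<in> I \<Longrightarrow> prob_space (qdist qth n)"
    using meas norm by (simp add: prob_space_qdist)
  show "prob_space (Qprod qth I)"
    unfolding Qprod_def by (rule prob_space_PiM[OF prob])
  show "AE \<theta> in Qprod qth I. \<forall>k\<in>I. 0 < \<theta> k \<and> \<theta> k < 1"
    unfolding Qprod_def using \<open>finite I\<close>
  proof (rule AE_finite_allI)
    show "AE \<theta> in PiM I (qdist qth). 0 < \<theta> k \<and> \<theta> k < 1" if "k \<in> I" for k
      using that meas by (intro AE_PiM_component[OF prob that] AE_qdist_in_unit_interval) auto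
  qed
qed

text \<open>The common summand r needs no integrability of its own: almost everywhere it equals
  f i0 - a i0 - g i0.\<close>
lemma integral_eq_common_offset:
  fixes f g :: "'i \<Rightarrow> 'a \<Rightarrow> real"
  assumes "prob_space Q" "i0 \<in> S"
    and f: "\<forall>i\<in>S. integrable Q (f i)" and g: "\<forall>i\<in>S. integrable Q (g i)"
    and split: "\<forall>i\<in>S. AE \<theta> in Q. f i \<theta> = a i + g i \<theta> + r \<theta>"
  shows "\<exists>c. \<forall>i\<in>S. (\<integral>\<theta>. f i \<theta> \<partial>Q) = a i + (\<integral>\<theta>. g i \<theta> \<partial>Q) + c"
proof -
  interpret prob_space Q by fact
  define r' where "r' \<theta> = f i0 \<theta> - a i0 - g i0 \<theta>" for \<theta>
  have r': "integrable Q r'"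
    unfolding r'_def using f g \<open>i0 \<in> S\<close> by auto
  have "(\<integral>\<theta>. f i \<theta> \<partial>Q) = a i + (\<integral>\<theta>. g i \<theta> \<partial>Q) + (\<integral>\<theta>. r' \<theta> \<partial>Q)" if i: "i \<in> S" for i
  proof -
    have "AE \<theta> in Q. f i \<theta> = a i + g i \<theta> + r' \<theta>"
      using split[rule_format, OF i] split[rule_format, OF \<open>i0 \<in> S\<close>]
      by eventually_elim (simp add: r'_def)
    then have "(\<integral>\<theta>. f i \<theta> \<partial>Q) = (\<integral>\<theta>. a i + g i \<theta> + r' \<theta> \<partial>Q)"
      using f g r' i by (intro integral_cong_AE) (auto intro: borel_measurable_integrable)
    also have "\<dots> = a i + (\<integral>\<theta>. g i \<theta> \<partial>Q) + (\<integral>\<theta>. r' \<theta> \<partial>Q)"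
      using g r' i prob_space by simp
    finally show ?thesis .
  qed
  then show ?thesis by blast
qed

definition obs_density :: "real \<Rightarrow> real \<Rightarrow> complex ^ 'm \<Rightarrow> nat \<Rightarrow> real" where
  "obs_density hsq wsq y m =
     1 / (2 * pi * (hsq * real m + wsq)) ^ CARD('m) * exp (- (norm y)\<^sup>2 / (2 * (hsq * real m + wsq)))"

definition ln_prior_factor :: "(nat \<Rightarrow> real) \<Rightarrow> (nat \<Rightarrow> real) \<Rightarrow> real \<Rightarrow> (nat \<Rightarrow> real)
    \<Rightarrow> nat \<Rightarrow> real \<Rightarrow> real" where
  "ln_prior_factor \<mu> \<sigma> dsq x k t =
     ln (\<sigma> k / (t - t\<^sup>2)) - (- \<sigma> k * ln (1 / t - 1) + \<mu> k - x k)\<^sup>2 / (2 * dsq)"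

lemma ln_joint_eq:
  fixes y :: "complex ^ 'm"
  assumes \<theta>: "\<forall>k\<in>{1..N}. 0 < \<theta> k \<and> \<theta> k < 1" and \<sigma>: "\<forall>k\<in>{1..N}. \<sigma> k > 0"
    and "dsq > 0" "hsq > 0" "wsq > 0" "m \<le> N"
  shows "ln (joint N \<mu> \<sigma> dsq hsq wsq x y m \<theta>) =
     ln (obs_density hsq wsq y m / real (N + 1)) + ln (Re (PBsum N m \<theta>))
     + (\<Sum>k = 1..N. ln_prior_factor \<mu> \<sigma> dsq x k (\<theta> k))
     + ln (1 / ((2 * pi) powr (real N / 2) * sqrt dsq ^ N))"
proof -
  define obs where "obs = obs_density hsq wsq y m / real (N + 1)"
  define P where "P = Re (PBsum N m \<theta>)"
  define factors where "factors = (\<Prod>k = 1..N. \<sigma> k / (\<theta> k - (\<theta> k)\<^sup>2))"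
  define const where "const = 1 / ((2 * pi) powr (real N / 2) * sqrt dsq ^ N)"
  define E where "E = - (\<Sum>k = 1..N. (- \<sigma> k * ln (1 / \<theta> k - 1) + \<mu> k - x k)\<^sup>2 / (2 * dsq))"
  have factor_pos: "\<sigma> k / (\<theta> k - (\<theta> k)\<^sup>2) > 0" if "k \<in> {1..N}" for k
  proof -
    have "\<theta> k - (\<theta> k)\<^sup>2 = \<theta> k * (1 - \<theta> k)" by (simp add: power2_eq_square algebra_simps)
    then show ?thesis using \<theta> \<sigma> that by simp
  qed
  have "hsq * real m + wsq > 0" using assms by (simp add: add_nonneg_pos)
  then have "obs > 0" by (simp add: obs_def obs_density_def)
  moreover have "P > 0" unfolding P_def using Re_PBsum_pos \<theta> \<open>m \<le> N\<close> by blast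
  moreover have "factors > 0" unfolding factors_def using factor_pos by (intro prod_pos) auto
  moreover have "const > 0" unfolding const_def using \<open>dsq > 0\<close> by simp
  moreover have "joint N \<mu> \<sigma> dsq hsq wsq x y m \<theta> = obs * P * (factors * const * exp E)"
    unfolding joint_def PB_def prior_def obs_def obs_density_def P_def factors_def const_def E_def
    by (simp add: sum_divide_distrib)
  ultimately have "ln (joint N \<mu> \<sigma> dsq hsq wsq x y m \<theta>) = ln obs + ln P + (ln factors + E) + ln const"
    by (simp add: ln_mult_pos)
  also have "ln factors = (\<Sum>k = 1..N. ln (\<sigma> k / (\<theta> k - (\<theta> k)\<^sup>2)))"
    unfolding factors_def by (rule ln_prod) (use factor_pos in force)+
  finally show ?thesis
    unfolding obs_def P_def const_def E_def ln_prior_factor_def by (simp add: sum_subtractf)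
qed

lemma ln_joint_fun_upd_eq:
  fixes y :: "complex ^ 'm"
  assumes \<theta>: "\<forall>k\<in>{1..N} - {n}. 0 < \<theta> k \<and> \<theta> k < 1" and "n \<in> {1..N}" "0 < z" "z < 1"
    and \<sigma>: "\<forall>k\<in>{1..N}. \<sigma> k > 0" and "dsq > 0" "hsq > 0" "wsq > 0" "m \<le> N"
  shows "ln (joint N \<mu> \<sigma> dsq hsq wsq x y m (\<theta>(n := z))) =
     (ln (obs_density hsq wsq y m / real (N + 1)) + ln_prior_factor \<mu> \<sigma> dsq x n z)
     + ln (Re (PBsum N m (\<theta>(n := z))))
     + ((\<Sum>k\<in>{1..N} - {n}. ln_prior_factor \<mu> \<sigma> dsq x k (\<theta> k))
        + ln (1 / ((2 * pi) powr (real N / 2) * sqrt dsq ^ N)))"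
proof -
  have cube: "\<forall>k\<in>{1..N}. 0 < (\<theta>(n := z)) k \<and> (\<theta>(n := z)) k < 1"
    using \<theta> assms by auto
  have "(\<Sum>k = 1..N. ln_prior_factor \<mu> \<sigma> dsq x k ((\<theta>(n := z)) k))
      = ln_prior_factor \<mu> \<sigma> dsq x n z + (\<Sum>k\<in>{1..N} - {n}. ln_prior_factor \<mu> \<sigma> dsq x k (\<theta> k))"
    unfolding sum.remove[OF finite_atLeastAtMost \<open>n \<in> {1..N}\<close>] by (auto intro: sum.cong)
  then show ?thesis
    using ln_joint_eq[OF cube \<sigma> \<open>dsq > 0\<close> \<open>hsq > 0\<close> \<open>wsq > 0\<close> \<open>m \<le> N\<close>,
        where \<mu> = \<mu> and x = x and y = y]
    by linarith
qed

lemma ga_eq_obs_density: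
  fixes y :: "complex ^ 'm"
  shows "ga N hsq wsq y qth m = (2 * pi) ^ CARD('m) * obs_density hsq wsq y m * F1 N qth m"
proof -
  have "(2 * pi * (hsq * real m + wsq)) ^ CARD('m) = (2 * pi) ^ CARD('m) * (wsq + real m * hsq) ^ CARD('m)"
    unfolding power_mult_distrib[symmetric] by (simp add: algebra_simps)
  then show ?thesis by (simp add: ga_def obs_density_def algebra_simps)
qed

lemma gb_eq_prior_factor:
  assumes "0 < z" "z < 1" "\<sigma> n > 0"
  shows "\<sigma> n * gb N \<mu> \<sigma> dsq x qT qth n z = F2 N qT qth n z * exp (ln_prior_factor \<mu> \<sigma> dsq x n z)"
proof -
  have "z - z\<^sup>2 = z * (1 - z)" by (simp add: power2_eq_square algebra_simps)
  moreover have "z * (1 - z) > 0" using assms by simp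
  ultimately show ?thesis
    using \<open>\<sigma> n > 0\<close> unfolding gb_def ln_prior_factor_def exp_diff
    by (simp add: exp_minus field_simps)
qed

lemma qstarT_eq_ga:
  fixes y :: "complex ^ 'm"
  assumes \<sigma>: "\<forall>n\<in>{1..N}. \<sigma> n > 0" and "dsq > 0" "hsq > 0" "wsq > 0"
    and meas: "\<forall>n\<in>{1..N}. qth n \<in> borel_measurable lborel"
    and norm: "\<forall>n\<in>{1..N}. (\<integral>\<^sup>+ z\<in>{0<..<1}. ennreal (qth n z) \<partial>lborel) = 1"
    and int_joint: "\<forall>m\<in>{0..N}. integrable (Qprod qth {1..N})
                      (\<lambda>\<theta>. ln (joint N \<mu> \<sigma> dsq hsq wsq x y m \<theta>))"
    and int_PB: "\<forall>m\<in>{0..N}. integrable (Qprod qth {1..N}) (\<lambda>\<theta>. ln (Re (PBsum N m \<theta>)))"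
    and "m \<le> N"
  shows "qstarT N \<mu> \<sigma> dsq hsq wsq x y qth m = ga N hsq wsq y qth m / (\<Sum>k = 0..N. ga N hsq wsq y qth k)"
proof -
  let ?Q = "Qprod qth {1..N}"
  have split: "\<forall>k\<in>{0..N}. AE \<theta> in ?Q. ln (joint N \<mu> \<sigma> dsq hsq wsq x y k \<theta>)
      = ln (obs_density hsq wsq y k / real (N + 1)) + ln (Re (PBsum N k \<theta>))
        + ((\<Sum>i = 1..N. ln_prior_factor \<mu> \<sigma> dsq x i (\<theta> i))
           + ln (1 / ((2 * pi) powr (real N / 2) * sqrt dsq ^ N)))"
    using AE_Qprod_in_unit_cube[OF meas norm finite_atLeastAtMost]
    by (auto elim!: eventually_mono
          simp: ln_joint_eq[OF _ \<sigma> \<open>dsq > 0\<close> \<open>hsq > 0\<close> \<open>wsq > 0\<close>] add.assoc)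
  obtain c where c: "\<forall>k\<in>{0..N}. (\<integral>\<theta>. ln (joint N \<mu> \<sigma> dsq hsq wsq x y k \<theta>) \<partial>?Q)
      = ln (obs_density hsq wsq y k / real (N + 1)) + (\<integral>\<theta>. ln (Re (PBsum N k \<theta>)) \<partial>?Q) + c"
    using integral_eq_common_offset[OF prob_space_Qprod[OF meas norm finite_atLeastAtMost] _ int_joint int_PB split]
    by blast
  define K where "K = exp c / ((2 * pi) ^ CARD('m) * real (N + 1))"
  have exp_integral: "exp (\<integral>\<theta>. ln (joint N \<mu> \<sigma> dsq hsq wsq x y k \<theta>) \<partial>?Q) = K * ga N hsq wsq y qth k"
    if "k \<in> {0..N}" for k
  proof -
    have "hsq * real k + wsq > 0" using assms by (simp add: add_nonneg_pos)
    then have "obs_density hsq wsq y k > 0" by (simp add: obs_density_def)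
    then show ?thesis
      using c that by (simp add: exp_add K_def ga_eq_obs_density F1_def)
  qed
  have "K > 0" by (simp add: K_def)
  then show ?thesis
    using exp_integral \<open>m \<le> N\<close> by (simp add: qstarT_def sum_distrib_left[symmetric])
qed

lemma qstarTheta_eq_gb:
  fixes y :: "complex ^ 'm"
  assumes \<sigma>: "\<forall>n\<in>{1..N}. \<sigma> n > 0" and "dsq > 0" "hsq > 0" "wsq > 0"
    and meas: "\<forall>n\<in>{1..N}. qth n \<in> borel_measurable lborel"
    and norm: "\<forall>n\<in>{1..N}. (\<integral>\<^sup>+ z\<in>{0<..<1}. ennreal (qth n z) \<partial>lborel) = 1"
    and qT_sum: "(\<Sum>m = 0..N. qT m) = 1"
    and "n \<in> {1..N}"
    and int_joint: "\<forall>z\<in>{0<..<1}. \<forall>m\<in>{0..N}. integrable (Qprod qth ({1..N} - {n}))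
                      (\<lambda>\<theta>. ln (joint N \<mu> \<sigma> dsq hsq wsq x y m (\<theta>(n := z))))"
    and int_PB: "\<forall>z\<in>{0<..<1}. \<forall>m\<in>{0..N}. integrable (Qprod qth ({1..N} - {n}))
                   (\<lambda>\<theta>. ln (Re (PBsum N m (\<theta>(n := z)))))"
    and "z \<in> {0<..<1}"
  shows "qstarTheta N \<mu> \<sigma> dsq hsq wsq x y qT qth n z
           = gb N \<mu> \<sigma> dsq x qT qth n z / (LINT w:{0<..<1}|lborel. gb N \<mu> \<sigma> dsq x qT qth n w)"
proof -
  let ?I = "{1..N} - {n}"
  let ?Q = "Qprod qth ?I"
  let ?S = "{0..N} \<times> {0<..<1::real}"
  have AE_in_cube: "AE \<theta> in ?Q. \<forall>k\<in>?I. 0 < \<theta> k \<and> \<theta> k < 1"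
    using meas norm by (intro AE_Qprod_in_unit_cube) auto
  have split: "\<forall>i\<in>?S. AE \<theta> in ?Q. ln (joint N \<mu> \<sigma> dsq hsq wsq x y (fst i) (\<theta>(n := snd i)))
      = (ln (obs_density hsq wsq y (fst i) / real (N + 1)) + ln_prior_factor \<mu> \<sigma> dsq x n (snd i))
        + ln (Re (PBsum N (fst i) (\<theta>(n := snd i))))
        + ((\<Sum>k\<in>?I. ln_prior_factor \<mu> \<sigma> dsq x k (\<theta> k))
           + ln (1 / ((2 * pi) powr (real N / 2) * sqrt dsq ^ N)))"
    using \<open>n \<in> {1..N}\<close>
    by (intro ballI eventually_mono[OF AE_in_cube]
          ln_joint_fun_upd_eq[OF _ _ _ _ \<sigma> \<open>dsq > 0\<close> \<open>hsq > 0\<close> \<open>wsq > 0\<close>]) auto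
  have "prob_space ?Q" using meas norm by (intro prob_space_Qprod) auto
  moreover have "\<forall>i\<in>?S. integrable ?Q (\<lambda>\<theta>. ln (joint N \<mu> \<sigma> dsq hsq wsq x y (fst i) (\<theta>(n := snd i))))"
    using int_joint by auto
  moreover have "\<forall>i\<in>?S. integrable ?Q (\<lambda>\<theta>. ln (Re (PBsum N (fst i) (\<theta>(n := snd i)))))"
    using int_PB by auto
  moreover have "(0, 1/2) \<in> ?S" by simp
  ultimately obtain c where c: "\<forall>i\<in>?S.
      (\<integral>\<theta>. ln (joint N \<mu> \<sigma> dsq hsq wsq x y (fst i) (\<theta>(n := snd i))) \<partial>?Q)
      = (ln (obs_density hsq wsq y (fst i) / real (N + 1)) + ln_prior_factor \<mu> \<sigma> dsq x n (snd i))
        + (\<integral>\<theta>. ln (Re (PBsum N (fst i) (\<theta>(n := snd i)))) \<partial>?Q) + c"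
    using integral_eq_common_offset[OF _ _ _ _ split] by blast
  define K where "K = exp ((\<Sum>m = 0..N. qT m * ln (obs_density hsq wsq y m / real (N + 1))) + c) * \<sigma> n"
  have exp_Hth: "exp (Hth N \<mu> \<sigma> dsq hsq wsq x y qT qth n w) = K * gb N \<mu> \<sigma> dsq x qT qth n w"
    if w: "w \<in> {0<..<1}" for w
  proof -
    have "Hth N \<mu> \<sigma> dsq hsq wsq x y qT qth n w
        = (\<Sum>m = 0..N. qT m * ((ln (obs_density hsq wsq y m / real (N + 1)) + ln_prior_factor \<mu> \<sigma> dsq x n w)
            + (\<integral>\<theta>. ln (Re (PBsum N m (\<theta>(n := w)))) \<partial>?Q) + c))"
      unfolding Hth_def using c w by (intro sum.cong) auto
    also have "\<dots> = (\<Sum>m = 0..N. qT m * ln (obs_density hsq wsq y m / real (N + 1))) + c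
        + ln_prior_factor \<mu> \<sigma> dsq x n w
        + (\<Sum>m = 0..N. qT m * (\<integral>\<theta>. ln (Re (PBsum N m (\<theta>(n := w)))) \<partial>?Q))"
      using qT_sum by (simp add: distrib_left sum.distrib flip: sum_distrib_right)
    finally show ?thesis
      using gb_eq_prior_factor[of w \<sigma> n] w \<sigma> \<open>n \<in> {1..N}\<close>
      by (simp add: exp_add K_def F2_def mult_ac)
  qed
  have "K > 0" using \<sigma> \<open>n \<in> {1..N}\<close> by (simp add: K_def)
  moreover have "(LINT w:{0<..<1}|lborel. exp (Hth N \<mu> \<sigma> dsq hsq wsq x y qT qth n w))
      = K * (LINT w:{0<..<1}|lborel. gb N \<mu> \<sigma> dsq x qT qth n w)"
    by (subst set_lebesgue_integral_cong[where g = "\<lambda>w. K * gb N \<mu> \<sigma> dsq x qT qth n w"])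
      (auto simp: exp_Hth set_integral_mult_right)
  ultimately show ?thesis
    using exp_Hth \<open>z \<in> {0<..<1}\<close> by (simp add: qstarTheta_def)
qed

theorem mainTheorem6:
  fixes N :: nat and y :: "complex ^ 'm" and x \<mu> \<sigma> :: "nat \<Rightarrow> real"
    and dsq hsq wsq :: real
    and qT :: "nat \<Rightarrow> real" and qth :: "nat \<Rightarrow> real \<Rightarrow> real"
  assumes N: "N \<ge> 1"
    and \<sigma>pos: "\<forall>n\<in>{1..N}. \<sigma> n > 0"
    and dsq: "dsq > 0" and hsq: "hsq > 0" and wsq: "wsq > 0"
    and qT_nonneg: "\<forall>m\<in>{0..N}. qT m \<ge> 0"
    and qT_sum: "(\<Sum>m = 0..N. qT m) = 1"
    and qth_meas: "\<forall>n\<in>{1..N}. qth n \<in> borel_measurable lborel"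
    and qth_nonneg: "\<forall>n\<in>{1..N}. \<forall>z. qth n z \<ge> 0"
    and qth_int: "\<forall>n\<in>{1..N}. (\<integral>\<^sup>+ z\<in>{0<..<1}. ennreal (qth n z) \<partial>lborel) = 1"
    and fin1: "\<forall>m\<in>{0..N}. integrable (Qprod qth {1..N})
                 (\<lambda>\<theta>. ln (joint N \<mu> \<sigma> dsq hsq wsq x y m \<theta>))"
    and fin2: "\<forall>m\<in>{0..N}. integrable (Qprod qth {1..N})
                 (\<lambda>\<theta>. ln (Re (PBsum N m \<theta>)))"
    and fin3: "\<forall>n\<in>{1..N}. \<forall>z\<in>{0<..<1}. \<forall>m\<in>{0..N}.
                 integrable (Qprod qth ({1..N} - {n}))
                   (\<lambda>\<theta>. ln (joint N \<mu> \<sigma> dsq hsq wsq x y m (\<theta>(n := z))))"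
    and fin4: "\<forall>n\<in>{1..N}. \<forall>z\<in>{0<..<1}. \<forall>m\<in>{0..N}.
                 integrable (Qprod qth ({1..N} - {n}))
                   (\<lambda>\<theta>. ln (Re (PBsum N m (\<theta>(n := z)))))"
  shows "(\<forall>m\<in>{0..N}. qstarT N \<mu> \<sigma> dsq hsq wsq x y qth m
             = ga N hsq wsq y qth m / (\<Sum>k = 0..N. ga N hsq wsq y qth k))
       \<and> (\<forall>n\<in>{1..N}. \<forall>z\<in>{0<..<1}. qstarTheta N \<mu> \<sigma> dsq hsq wsq x y qT qth n z
             = gb N \<mu> \<sigma> dsq x qT qth n z / (LINT w:{0<..<1}|lborel. gb N \<mu> \<sigma> dsq x qT qth n w))"
proof (intro conjI ballI)
  fix m assume "m \<in> {0..N}"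
  then show "qstarT N \<mu> \<sigma> dsq hsq wsq x y qth m
      = ga N hsq wsq y qth m / (\<Sum>k = 0..N. ga N hsq wsq y qth k)"
    by (intro qstarT_eq_ga[OF \<sigma>pos dsq hsq wsq qth_meas qth_int fin1 fin2]) simp
next
  fix n z assume "n \<in> {1..N}" "z \<in> {0<..<1::real}"
  then show "qstarTheta N \<mu> \<sigma> dsq hsq wsq x y qT qth n z
      = gb N \<mu> \<sigma> dsq x qT qth n z / (LINT w:{0<..<1}|lborel. gb N \<mu> \<sigma> dsq x qT qth n w)"
    using fin3 fin4 by (intro qstarTheta_eq_gb[OF \<sigma>pos dsq hsq wsq qth_meas qth_int qT_sum]) auto
qed

end
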